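(* Let $\phi:\mathbb{R}\to\mathbb{R}^{+}$ be continuous and, for $x\in\mathbb{R}^m$, let $\Phi(x)_k=\phi(x_k)/\sum_{j=1}^m\phi(x_j)$. Let $\mathcal{X}\subset\mathbb{R}^d$ be a compact input feature space, and for each $n$ let $X^{(n)}=(x^{(n)}_1,\dots,x^{(n)}_n)\in\mathcal{X}^n$ be input features for $n$ items. Let $Q^{(n)}=\gamma(x^{(n)}_1,\dots,x^{(n)}_n)\in\mathbb{R}^{n\times d}$ and $K^{(n)}=\kappa(x^{(n)}_1,\dots,x^{(n)}_n)\in\mathbb{R}^{n\times d}$, where $\gamma,\kappa:\mathcal{X}^n\to\mathbb{R}^{n\times d}$ are continuous maps, each expressible as a composition of $L$ layers $g_L\circ f_L\circ\cdots\circ g_1\circ f_1$ (with $L$ and the layer maps not depending on $n$), where each $f_i$ is a feedforward component acting tokenwise, $f_i(z_1,\dots,z_n)_k=f_i(z_k)$, and each $g_i$ is a self $\Phi$-normalized attentional component $g_i(z_1,\dots,z_n)_k=\sum_{1\le l\le n}\alpha_{lk}v_i(z_l)$, where $v_i$ is a feedforward network and $\alpha_{lk}\in[0,1]$ are $\Phi$-normalized attention coefficients. Let $e^{(n)}_{ij}=q^{(n)}_i(k^{(n)}_j)^T$, where $q^{(n)}_i,k^{(n)}_j$ are the $i$-th row of $Q^{(n)}$ and $j$-th row of $K^{(n)}$. Then for any $\epsilon>0$ there exists $n\in\mathbb{N}$ such that for every query index $i$, $\Phi(e^{(n)}_{i,\cdot})_k<\epsilon$ for all $1\le k\le n$; that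 is, the $\Phi$-normalized attention coefficients disperse.
   Context: $\Phi$-normalized attention coefficients: for tokens $z_1,\dots,z_n$, $\alpha_{lk}=\phi(\psi_q(z)_k\psi_k(z)_l^T)/\sum_{j=1}^n\phi(\psi_q(z)_k\psi_k(z)_j^T)$, where $\psi_q,\psi_k$ are continuous query/key maps and $\phi:\mathbb{R}\to\mathbb{R}^+$ is continuous. Feedforward components and networks are continuous maps $\mathbb{R}^d\to\mathbb{R}^d$. *)

theory Defs
  imports "HOL-Analysis.Analysis"
begin

text \<open>Token sequences of length n are functions nat \<Rightarrow> 'a, only indices k < n matter
  (0-based indexing). The token space 'a plays the role of R^d.\<close>

definition Phi :: "(real \<Rightarrow> real) \<Rightarrow> nat \<Rightarrow> (nat \<Rightarrow> real) \<Rightarrow> nat \<Rightarrow> real" where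
  "Phi \<phi> m x k = \<phi> (x k) / (\<Sum>j<m. \<phi> (x j))"

definition ff_layer :: "('a \<Rightarrow> 'b) \<Rightarrow> (nat \<Rightarrow> 'a) \<Rightarrow> (nat \<Rightarrow> 'b)" where
  "ff_layer f z = (\<lambda>k. f (z k))"

definition attn_coeff :: "(real \<Rightarrow> real) \<Rightarrow> ('a \<Rightarrow> 'b::real_inner) \<Rightarrow> ('a \<Rightarrow> 'b)
    \<Rightarrow> nat \<Rightarrow> (nat \<Rightarrow> 'a) \<Rightarrow> nat \<Rightarrow> nat \<Rightarrow> real" where
  "attn_coeff \<phi> psi_q psi_k n z l k =
     \<phi> (psi_q (z k) \<bullet> psi_k (z l)) / (\<Sum>j<n. \<phi> (psi_q (z k) \<bullet> psi_k (z j)))"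

definition attn_layer :: "(real \<Rightarrow> real) \<Rightarrow> ('a \<Rightarrow> 'b::real_inner) \<Rightarrow> ('a \<Rightarrow> 'b)
    \<Rightarrow> ('a \<Rightarrow> 'c::real_vector) \<Rightarrow> nat \<Rightarrow> (nat \<Rightarrow> 'a) \<Rightarrow> (nat \<Rightarrow> 'c)" where
  "attn_layer \<phi> psi_q psi_k v n z = (\<lambda>k. \<Sum>l<n. attn_coeff \<phi> psi_q psi_k n z l k *\<^sub>R v (z l))"

text \<open>A layer is a tuple (f, psi_q, psi_k, v): feedforward component f followed by the
  attentional component with query/key maps psi_q, psi_k and value network v.
  A list [layer_1, ..., layer_L] denotes g_L o f_L o ... o g_1 o f_1.\<close>
type_synonym 'a layer = "('a \<Rightarrow> 'a) \<times> ('a \<Rightarrow> 'a) \<times> ('a \<Rightarrow> 'a) \<times> ('a \<Rightarrow> 'a)"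

fun apply_layer :: "(real \<Rightarrow> real) \<Rightarrow> 'a::real_inner layer \<Rightarrow> nat \<Rightarrow> (nat \<Rightarrow> 'a) \<Rightarrow> (nat \<Rightarrow> 'a)" where
  "apply_layer \<phi> (f, psi_q, psi_k, v) n z = attn_layer \<phi> psi_q psi_k v n (ff_layer f z)"

primrec apply_layers :: "(real \<Rightarrow> real) \<Rightarrow> 'a::real_inner layer list \<Rightarrow> nat \<Rightarrow> (nat \<Rightarrow> 'a) \<Rightarrow> (nat \<Rightarrow> 'a)" where
  "apply_layers \<phi> [] n z = z"
| "apply_layers \<phi> (ly # lys) n z = apply_layers \<phi> lys n (apply_layer \<phi> ly n z)"

definition layer_continuous :: "'a::topological_space layer \<Rightarrow> bool" where
  "layer_continuous ly = (case ly of (f, psi_q, psi_k, v) \<Rightarrow>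
     continuous_on UNIV f \<and> continuous_on UNIV psi_q \<and> continuous_on UNIV psi_k \<and> continuous_on UNIV v)"

end

theory Submission
  imports Defs
begin

text \<open>Attention coefficients are convex weights, so every attentional component maps tokens of
  norm at most R to tokens whose norm is bounded by a constant independent of the number n of
  tokens; the same then holds for any finite stack of layers. On a compact input space the
  scores e_ij therefore stay in a fixed interval [-C, C], on which \<phi> is bounded between two
  positive constants m and M. Hence each normalised score is at most M / (n m), which tends
  to 0 as n grows.\<close>

lemma attn_coeff_nonneg:
  assumes "\<And>t. \<phi> t > 0"
  shows "attn_coeff \<phi> psi_q psi_k n z l k \<ge> 0"
  unfolding attn_coeff_def using assms by (simp add: less_imp_le sum_nonneg)

lemma sum_attn_coeff:
  assumes "\<And>t. \<phi> t > 0" and "k < n"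
  shows "(\<Sum>l<n. attn_coeff \<phi> psi_q psi_k n z l k) = 1"
proof -
  have "(\<Sum>j<n. \<phi> (psi_q (z k) \<bullet> psi_k (z j))) > 0"
    using assms by (intro sum_pos) auto
  then show ?thesis
    unfolding attn_coeff_def by (simp add: sum_divide_distrib[symmetric])
qed

lemma norm_attn_layer_le:
  assumes phi_pos: "\<And>t. \<phi> t > 0" and "k < n"
    and v_bound: "\<And>l. l < n \<Longrightarrow> norm (v (z l)) \<le> B"
  shows "norm (attn_layer \<phi> psi_q psi_k v n z k) \<le> B"
proof -
  let ?\<alpha> = "\<lambda>l. attn_coeff \<phi> psi_q psi_k n z l k"
  have "norm (attn_layer \<phi> psi_q psi_k v n z k) \<le> (\<Sum>l<n. norm (?\<alpha> l *\<^sub>R v (z l)))"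
    unfolding attn_layer_def by (rule norm_sum)
  also have "\<dots> \<le> (\<Sum>l<n. ?\<alpha> l * B)"
  proof (rule sum_mono)
    fix l assume "l \<in> {..<n}"
    moreover have "?\<alpha> l \<ge> 0"
      by (rule attn_coeff_nonneg[of \<phi>, OF phi_pos])
    ultimately show "norm (?\<alpha> l *\<^sub>R v (z l)) \<le> ?\<alpha> l * B"
      using v_bound by (simp add: mult_left_mono)
  qed
  also have "\<dots> = B"
    using sum_attn_coeff[where \<phi>=\<phi> and psi_q=psi_q and psi_k=psi_k and z=z, OF phi_pos \<open>k < n\<close>]
    by (simp add: sum_distrib_right[symmetric])
  finally show ?thesis .
qed

definition preserves_bounds :: "(nat \<Rightarrow> (nat \<Rightarrow> 'a::real_normed_vector) \<Rightarrow> nat \<Rightarrow> 'b::real_normed_vector) \<Rightarrow> bool"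
  where "preserves_bounds F \<longleftrightarrow>
    (\<forall>R. \<exists>B. \<forall>n z. (\<forall>l<n. norm (z l) \<le> R) \<longrightarrow> (\<forall>k<n. norm (F n z k) \<le> B))"

lemma preserves_bounds_id: "preserves_bounds (\<lambda>n z. z)"
  unfolding preserves_bounds_def by blast

lemma preserves_bounds_comp:
  assumes "preserves_bounds F" and "preserves_bounds G"
  shows "preserves_bounds (\<lambda>n. G n \<circ> F n)"
  unfolding preserves_bounds_def
proof
  fix R
  obtain B where "\<forall>n z. (\<forall>l<n. norm (z l) \<le> R) \<longrightarrow> (\<forall>k<n. norm (F n z k) \<le> B)"
    using assms(1) unfolding preserves_bounds_def by blast
  moreover obtain B' where "\<forall>n z. (\<forall>l<n. norm (z l) \<le> B) \<longrightarrow> (\<forall>k<n. norm (G n z k) \<le> B')"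
    using assms(2) unfolding preserves_bounds_def by blast
  ultimately show "\<exists>B'. \<forall>n z. (\<forall>l<n. norm (z l) \<le> R) \<longrightarrow> (\<forall>k<n. norm ((G n \<circ> F n) z k) \<le> B')"
    by (intro exI[of _ B']) simp
qed

lemma preserves_bounds_apply_layer:
  fixes ly :: "'a::euclidean_space layer"
  assumes phi_pos: "\<And>t. \<phi> t > 0" and "layer_continuous ly"
  shows "preserves_bounds (apply_layer \<phi> ly)"
  unfolding preserves_bounds_def
proof
  fix R
  obtain f psi_q psi_k v where ly: "ly = (f, psi_q, psi_k, v)" by (cases ly)
  have "continuous_on UNIV f" "continuous_on UNIV v"
    using \<open>layer_continuous ly\<close> by (auto simp: ly layer_continuous_def)
  then have "continuous_on (cball 0 R) (v \<circ> f)"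
    by (metis continuous_on_compose continuous_on_subset subset_UNIV)
  then have "bounded ((v \<circ> f) ` cball 0 R)"
    by (intro compact_imp_bounded compact_continuous_image) auto
  then obtain B where B: "\<forall>x\<in>cball 0 R. norm (v (f x)) \<le> B"
    unfolding bounded_iff by auto
  have "norm (apply_layer \<phi> ly n z k) \<le> B" if "\<forall>l<n. norm (z l) \<le> R" "k < n" for n z k
    unfolding ly apply_layer.simps using that B
    by (intro norm_attn_layer_le[of \<phi>, OF phi_pos]) (auto simp: ff_layer_def)
  then show "\<exists>B. \<forall>n z. (\<forall>l<n. norm (z l) \<le> R) \<longrightarrow> (\<forall>k<n. norm (apply_layer \<phi> ly n z k) \<le> B)"
    by blast
qed

lemma preserves_bounds_apply_layers:
  fixes lys :: "'a::euclidean_space layer list"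
  assumes phi_pos: "\<And>t. \<phi> t > 0" and "\<forall>ly\<in>set lys. layer_continuous ly"
  shows "preserves_bounds (apply_layers \<phi> lys)"
  using assms(2)
proof (induction lys)
  case Nil
  show ?case using preserves_bounds_id by simp
next
  case (Cons ly lys)
  have "apply_layers \<phi> (ly # lys) = (\<lambda>n. apply_layers \<phi> lys n \<circ> apply_layer \<phi> ly n)"
    by (simp add: fun_eq_iff)
  with Cons show ?case
    by (metis list.set_intros preserves_bounds_comp preserves_bounds_apply_layer[of \<phi>, OF phi_pos])
qed

lemma Phi_le_max_div_min:
  assumes bounds: "\<And>j. j < n \<Longrightarrow> m \<le> \<phi> (x j) \<and> \<phi> (x j) \<le> M"
    and "0 < m" and "k < n"
  shows "Phi \<phi> n x k \<le> M / (n * m)"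
proof -
  have "n * m \<le> (\<Sum>j<n. \<phi> (x j))"
    using sum_mono[of "{..<n}" "\<lambda>_. m"] bounds by simp
  moreover have "0 < n * m" and "\<phi> (x k) \<le> M" and "0 \<le> M"
    using \<open>0 < m\<close> \<open>k < n\<close> bounds[of k] by auto
  ultimately show ?thesis
    unfolding Phi_def by (intro frac_le) auto
qed

lemma continuous_pos_bounds_compact:
  fixes \<phi> :: "'a::metric_space \<Rightarrow> real"
  assumes "compact S" "S \<noteq> {}" "continuous_on S \<phi>" "\<And>t. t \<in> S \<Longrightarrow> \<phi> t > 0"
  shows "\<exists>m M. 0 < m \<and> (\<forall>t\<in>S. m \<le> \<phi> t \<and> \<phi> t \<le> M)"
proof -
  obtain t\<^sub>m where "t\<^sub>m \<in> S" "\<forall>t\<in>S. \<phi> t\<^sub>m \<le> \<phi> t"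
    using continuous_attains_inf[OF assms(1-3)] by blast
  moreover obtain t\<^sub>M where "\<forall>t\<in>S. \<phi> t \<le> \<phi> t\<^sub>M"
    using continuous_attains_sup[OF assms(1-3)] by blast
  ultimately show ?thesis using assms(4) by blast
qed

lemma Phi_uniformly_small:
  assumes phi_cont: "continuous_on UNIV \<phi>" and phi_pos: "\<And>t. \<phi> t > 0" and "\<epsilon> > 0"
  shows "\<exists>N. \<forall>n\<ge>N. \<forall>x. (\<forall>j<n. \<bar>x j\<bar> \<le> C) \<longrightarrow> (\<forall>k<n. Phi \<phi> n x k < \<epsilon>)"
proof -
  obtain m M where "0 < m" and mM: "\<forall>t\<in>{-\<bar>C\<bar>..\<bar>C\<bar>}. m \<le> \<phi> t \<and> \<phi> t \<le> M"
    using continuous_pos_bounds_compact[of "{-\<bar>C\<bar>..\<bar>C\<bar>}" \<phi>]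
      continuous_on_subset[OF phi_cont] phi_pos by auto
  obtain N :: nat where N: "M / (m * \<epsilon>) < N"
    using reals_Archimedean2 by blast
  have "\<forall>k<n. Phi \<phi> n x k < \<epsilon>" if "n \<ge> N" "\<forall>j<n. \<bar>x j\<bar> \<le> C" for n x
  proof (intro allI impI)
    fix k assume "k < n"
    have "m \<le> \<phi> (x j) \<and> \<phi> (x j) \<le> M" if "j < n" for j
      using mM \<open>\<forall>j<n. \<bar>x j\<bar> \<le> C\<close> that by (force simp: abs_le_iff)
    then have "Phi \<phi> n x k \<le> M / (n * m)"
      using Phi_le_max_div_min \<open>0 < m\<close> \<open>k < n\<close> by blast
    also have "\<dots> < \<epsilon>"
    proof -
      have "M < N * (m * \<epsilon>)"
        using N \<open>0 < m\<close> \<open>\<epsilon> > 0\<close> by (simp add: pos_divide_less_eq)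
      also have "\<dots> \<le> n * (m * \<epsilon>)"
        using \<open>n \<ge> N\<close> \<open>0 < m\<close> \<open>\<epsilon> > 0\<close> by (intro mult_right_mono) auto
      finally show ?thesis
        using \<open>k < n\<close> \<open>0 < m\<close> by (simp add: pos_divide_less_eq mult.commute mult.left_commute)
    qed
    finally show "Phi \<phi> n x k < \<epsilon>" .
  qed
  then show ?thesis by blast
qed

theorem theorem1:
  fixes \<phi> :: "real \<Rightarrow> real"
    and \<X> :: "'a::euclidean_space set"
    and Xs :: "nat \<Rightarrow> nat \<Rightarrow> 'a"
    and L :: nat
    and Lg Lk :: "'a layer list"
  assumes phi_cont: "continuous_on UNIV \<phi>"
    and phi_pos: "\<And>t. \<phi> t > 0"
    and X_compact: "compact \<X>"
    and inputs: "\<And>n k. k < n \<Longrightarrow> Xs n k \<in> \<X>"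
    and len_g: "length Lg = L" and len_k: "length Lk = L"
    and cont_g: "\<forall>ly \<in> set Lg. layer_continuous ly"
    and cont_k: "\<forall>ly \<in> set Lk. layer_continuous ly"
  shows "\<forall>\<epsilon>>0. \<exists>n\<ge>1. \<forall>i<n. \<forall>k<n.
           Phi \<phi> n (\<lambda>j. apply_layers \<phi> Lg n (Xs n) i \<bullet> apply_layers \<phi> Lk n (Xs n) j) k < \<epsilon>"
proof (intro allI impI)
  fix \<epsilon> :: real assume "\<epsilon> > 0"
  obtain R where "\<And>x. x \<in> \<X> \<Longrightarrow> norm x \<le> R"
    using compact_imp_bounded[OF X_compact] unfolding bounded_iff by blast
  then have XR: "\<forall>l<n. norm (Xs n l) \<le> R" for n
    using inputs by blast
  obtain Bg Bk where
    Bg: "\<And>n i. i < n \<Longrightarrow> norm (apply_layers \<phi> Lg n (Xs n) i) \<le> Bg" and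
    Bk: "\<And>n j. j < n \<Longrightarrow> norm (apply_layers \<phi> Lk n (Xs n) j) \<le> Bk"
    using preserves_bounds_apply_layers[OF phi_pos cont_g]
      preserves_bounds_apply_layers[OF phi_pos cont_k] XR
    unfolding preserves_bounds_def by meson
  have scores: "\<bar>apply_layers \<phi> Lg n (Xs n) i \<bullet> apply_layers \<phi> Lk n (Xs n) j\<bar> \<le> Bg * Bk"
    if "i < n" "j < n" for n i j
    using Cauchy_Schwarz_ineq2 Bg[OF that(1)] Bk[OF that(2)]
    by (meson mult_mono norm_ge_zero order_trans)
  obtain N where "\<forall>n\<ge>N. \<forall>x. (\<forall>j<n. \<bar>x j\<bar> \<le> Bg * Bk) \<longrightarrow> (\<forall>k<n. Phi \<phi> n x k < \<epsilon>)"
    using Phi_uniformly_small[OF phi_cont phi_pos \<open>\<epsilon> > 0\<close>] by blast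
  then show "\<exists>n\<ge>1. \<forall>i<n. \<forall>k<n.
      Phi \<phi> n (\<lambda>j. apply_layers \<phi> Lg n (Xs n) i \<bullet> apply_layers \<phi> Lk n (Xs n) j) k < \<epsilon>"
    using scores by (intro exI[of _ "max N 1"]) simp
qed

end
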